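(* Let $H$ be a forest, let $(A,B)$ be a bipartition of $H$ with $|A|=|B|$, and let $n$ be an integer with $0\le n\le |A|$. Then there is a stable set $X$ of $H$ with $|X|=|A|$ and $|X\cap A|=n$.
   Context: A bipartition $(A,B)$ of $H$ is a partition of $V(H)$ into two stable sets. *)

theory Defs
  imports Main
begin

definition simple_graph :: "'a set \<Rightarrow> ('a \<Rightarrow> 'a \<Rightarrow> bool) \<Rightarrow> bool" where
  "simple_graph V E \<longleftrightarrow> finite V \<and> (\<forall>x y. E x y \<longrightarrow> x \<in> V \<and> y \<in> V)
     \<and> (\<forall>x y. E x y \<longrightarrow> E y x) \<and> (\<forall>x. \<not> E x x)"

definition is_cycle :: "'a set \<Rightarrow> ('a \<Rightarrow> 'a \<Rightarrow> bool) \<Rightarrow> 'a list \<Rightarrow> bool" where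
  "is_cycle V E cs \<longleftrightarrow> length cs \<ge> 3 \<and> distinct cs \<and> set cs \<subseteq> V
     \<and> (\<forall>i. Suc i < length cs \<longrightarrow> E (cs ! i) (cs ! Suc i))
     \<and> E (last cs) (hd cs)"

definition forest :: "'a set \<Rightarrow> ('a \<Rightarrow> 'a \<Rightarrow> bool) \<Rightarrow> bool" where
  "forest V E \<longleftrightarrow> simple_graph V E \<and> (\<nexists>cs. is_cycle V E cs)"

definition stable_set :: "'a set \<Rightarrow> ('a \<Rightarrow> 'a \<Rightarrow> bool) \<Rightarrow> 'a set \<Rightarrow> bool" where
  "stable_set V E X \<longleftrightarrow> X \<subseteq> V \<and> (\<forall>x\<in>X. \<forall>y\<in>X. \<not> E x y)"

definition bipartition :: "'a set \<Rightarrow> ('a \<Rightarrow> 'a \<Rightarrow> bool) \<Rightarrow> 'a set \<Rightarrow> 'a set \<Rightarrow> bool" where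
  "bipartition V E A B \<longleftrightarrow> A \<union> B = V \<and> A \<inter> B = {}
     \<and> stable_set V E A \<and> stable_set V E B"

end

theory Submission
  imports Defs
begin

text \<open>Strengthen the claim to arbitrary bipartitions: for every \<open>n \<le> |A|\<close> there is a
stable set \<open>X\<close> with \<open>|X \<inter> A| = n\<close> and \<open>|X| \<ge> min |A| |B|\<close>. For \<open>n = 0\<close> take \<open>B\<close>,
for \<open>n = |A|\<close> take \<open>A\<close>. Otherwise delete a leaf \<open>x\<close> (the endpoint of a longest path)
together with its neighbour; each side loses at most one vertex, so induction applied to the
smaller forest (asking for \<open>n - 1\<close> vertices of \<open>A\<close> if \<open>x \<in> A\<close>) and adding \<open>x\<close> back gives
the claim. When \<open>|A| = |B|\<close>, discarding surplus vertices outside \<open>A\<close> yields \<open>|X| = |A|\<close>.\<close>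

definition is_path :: "'a set \<Rightarrow> ('a \<Rightarrow> 'a \<Rightarrow> bool) \<Rightarrow> 'a list \<Rightarrow> bool" where
  "is_path V E p \<longleftrightarrow> p \<noteq> [] \<and> distinct p \<and> set p \<subseteq> V
     \<and> (\<forall>i. Suc i < length p \<longrightarrow> E (p ! i) (p ! Suc i))"

lemma is_path_Cons:
  assumes "p \<noteq> []"
  shows "is_path V E (y # p) \<longleftrightarrow> y \<in> V \<and> y \<notin> set p \<and> E y (hd p) \<and> is_path V E p"
  using assms unfolding is_path_def
  by (cases p) (auto simp: less_Suc_eq_0_disj)

lemma is_cycle_take_path:
  assumes "is_path V E p" "2 \<le> j" "j < length p" "E (p ! j) (hd p)"
  shows "is_cycle V E (take (Suc j) p)"
  unfolding is_cycle_def
proof (intro conjI allI impI)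
  have "last (take (Suc j) p) = p ! j" using assms(3) by (simp add: take_Suc_conv_app_nth)
  moreover have "hd (take (Suc j) p) = hd p" by (simp add: hd_take)
  ultimately show "E (last (take (Suc j) p)) (hd (take (Suc j) p))" using assms(4) by simp
qed (use assms set_take_subset[of "Suc j" p] in \<open>auto simp: is_path_def\<close>)

lemma longest_path_exists:
  assumes "finite V" "V \<noteq> {}"
  obtains p where "is_path V E p" "\<And>q. is_path V E q \<Longrightarrow> length q \<le> length p"
proof -
  obtain v where "v \<in> V" using assms(2) by blast
  then have "is_path V E [v]" by (simp add: is_path_def)
  moreover have "length q < Suc (card V)" if "is_path V E q" for q
  proof -
    have "length q = card (set q)" using that by (simp add: is_path_def distinct_card)
    also have "\<dots> \<le> card V" using that assms(1) by (simp add: is_path_def card_mono)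
    finally show ?thesis by simp
  qed
  ultimately show thesis
    using ex_has_greatest_nat[of "is_path V E" "[v]" length "Suc (card V)"] that by blast
qed

lemma forest_has_leaf:
  assumes "forest V E" "V \<noteq> {}"
  shows "\<exists>x\<in>V. \<forall>y z. E x y \<longrightarrow> E x z \<longrightarrow> y = z"
proof -
  have "finite V" and sym: "\<And>x y. E x y \<Longrightarrow> E y x" and irrefl: "\<And>x. \<not> E x x"
    and edges: "\<And>x y. E x y \<Longrightarrow> y \<in> V"
    using assms(1) by (auto simp: forest_def simple_graph_def)
  obtain p where p: "is_path V E p" and longest: "\<And>q. is_path V E q \<Longrightarrow> length q \<le> length p"
    using longest_path_exists[OF \<open>finite V\<close> assms(2)] by blast
  have "p \<noteq> []" using p by (simp add: is_path_def)
  have neighbour: "y = p ! 1" if "E (hd p) y" for y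
  proof -
    have "y \<in> set p"
    proof (rule ccontr)
      assume "y \<notin> set p"
      then have "is_path V E (y # p)"
        using is_path_Cons[OF \<open>p \<noteq> []\<close>] p sym[OF that] edges[OF that] by simp
      then show False using longest[of "y # p"] by simp
    qed
    then obtain j where j: "j < length p" "y = p ! j" by (auto simp: in_set_conv_nth)
    have "j \<noteq> 0" using that j irrefl \<open>p \<noteq> []\<close> by (metis hd_conv_nth)
    moreover have "\<not> 2 \<le> j"
    proof
      assume "2 \<le> j"
      then have "is_cycle V E (take (Suc j) p)"
        using is_cycle_take_path[OF p _ j(1)] sym[OF that] j(2) by simp
      then show False using assms(1) by (auto simp: forest_def)
    qed
    ultimately have "j = 1" by arith
    then show ?thesis using j by simp
  qed
  have "hd p \<in> V" using p \<open>p \<noteq> []\<close> by (auto simp: is_path_def)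
  then show ?thesis using neighbour by (intro bexI[of _ "hd p"]) auto
qed

definition induced :: "('a \<Rightarrow> 'a \<Rightarrow> bool) \<Rightarrow> 'a set \<Rightarrow> 'a \<Rightarrow> 'a \<Rightarrow> bool" where
  "induced E W a b \<longleftrightarrow> E a b \<and> a \<in> W \<and> b \<in> W"

lemma forest_induced:
  assumes "forest V E" "W \<subseteq> V"
  shows "forest W (induced E W)"
proof -
  have "is_cycle V E cs" if "is_cycle W (induced E W) cs" for cs
    using that assms(2) by (auto simp: is_cycle_def induced_def)
  moreover have "simple_graph W (induced E W)"
    using assms finite_subset by (auto simp: forest_def simple_graph_def induced_def)
  ultimately show ?thesis using assms(1) by (auto simp: forest_def)
qed

lemma bipartition_induced:
  assumes "bipartition V E A B" "W \<subseteq> V"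
  shows "bipartition W (induced E W) (A \<inter> W) (B \<inter> W)"
  using assms unfolding bipartition_def stable_set_def induced_def by blast

lemma stable_set_induced_iff:
  assumes "W \<subseteq> V"
  shows "stable_set W (induced E W) X \<longleftrightarrow> stable_set V E X \<and> X \<subseteq> W"
  using assms unfolding stable_set_def induced_def by blast

lemma stable_set_card_le_after_leaf_deletion:
  assumes "stable_set V E A" "finite A" and leaf: "\<forall>y z. E x y \<longrightarrow> E x z \<longrightarrow> y = z"
  shows "card A \<le> card (A - insert x {y. E x y}) + 1"
proof -
  have "card (A \<inter> insert x {y. E x y}) \<le> 1"
    using assms unfolding One_nat_def card_le_Suc0_iff_eq[OF finite_Int[OF disjI1[OF assms(2)]]]
    by (auto simp: stable_set_def)
  then show ?thesis
    using card_Diff_subset_Int[of A "insert x {y. E x y}"] assms(2) by simp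
qed

lemma stable_set_subset:
  assumes "stable_set V E X" "Y \<subseteq> X"
  shows "stable_set V E Y"
  using assms unfolding stable_set_def by blast

lemma stable_set_insert_deleted_vertex:
  assumes "simple_graph V E" "x \<in> V"
    and W: "W = V - insert x {y. E x y}" and X: "stable_set W (induced E W) X"
  shows "stable_set V E (insert x X)"
    and "card (insert x X) = card X + 1"
    and "card (insert x X \<inter> A) = card (X \<inter> (A \<inter> W)) + (if x \<in> A then 1 else 0)"
proof -
  have "finite V" and sym: "\<And>x y. E x y \<Longrightarrow> E y x" and irrefl: "\<And>x. \<not> E x x"
    using assms(1) by (auto simp: simple_graph_def)
  have "W \<subseteq> V" using W by blast
  then have "X \<subseteq> W" "stable_set V E X" using X stable_set_induced_iff by blast+
  have "\<forall>y\<in>X. \<not> E x y \<and> \<not> E y x" using \<open>X \<subseteq> W\<close> sym W by blast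
  then show "stable_set V E (insert x X)"
    using \<open>stable_set V E X\<close> \<open>x \<in> V\<close> irrefl by (auto simp: stable_set_def)
  have "finite X" "x \<notin> X"
    using \<open>X \<subseteq> W\<close> \<open>W \<subseteq> V\<close> \<open>finite V\<close> W by (auto intro: finite_subset)
  moreover have "X \<inter> (A \<inter> W) = X \<inter> A" using \<open>X \<subseteq> W\<close> by blast
  ultimately show "card (insert x X) = card X + 1"
    and "card (insert x X \<inter> A) = card (X \<inter> (A \<inter> W)) + (if x \<in> A then 1 else 0)"
    by (simp_all add: Int_insert_left)
qed

lemma forest_stable_set_meeting_side:
  assumes "forest V E" "bipartition V E A B" "n \<le> card A"
  shows "\<exists>X. stable_set V E X \<and> card (X \<inter> A) = n \<and> min (card A) (card B) \<le> card X"
  using assms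
proof (induction "card V" arbitrary: V E A B n rule: less_induct)
  case less
  have "finite V" using less.prems(1) by (auto simp: forest_def simple_graph_def)
  have sides: "A \<union> B = V" "A \<inter> B = {}" "stable_set V E A" "stable_set V E B"
    using less.prems(2) by (auto simp: bipartition_def)
  have "finite A" "finite B" using \<open>finite V\<close> sides(1) by (auto intro: finite_subset)
  consider "n = 0" | "n = card A" | "0 < n" "n < card A"
    using less.prems(3) by linarith
  then show ?case
  proof cases
    case 1
    then show ?thesis using sides by (intro exI[of _ B]) (auto simp: Int_commute)
  next
    case 2
    then show ?thesis using sides by (intro exI[of _ A]) auto
  next
    case 3
    then have "V \<noteq> {}" using sides(1) by auto
    then obtain x where "x \<in> V" and leaf: "\<forall>y z. E x y \<longrightarrow> E x z \<longrightarrow> y = z"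
      using forest_has_leaf[OF less.prems(1)] by blast
    define W where "W = V - insert x {y. E x y}"
    have "W \<subseteq> V" by (auto simp: W_def)
    have "card W < card V" using \<open>finite V\<close> \<open>x \<in> V\<close> by (auto simp: W_def intro: psubset_card_mono)
    have "A \<inter> W = A - insert x {y. E x y}" "B \<inter> W = B - insert x {y. E x y}"
      using sides(1) by (auto simp: W_def)
    then have "card A \<le> card (A \<inter> W) + 1" "card B \<le> card (B \<inter> W) + 1"
      using stable_set_card_le_after_leaf_deletion[OF sides(3) \<open>finite A\<close> leaf]
        stable_set_card_le_after_leaf_deletion[OF sides(4) \<open>finite B\<close> leaf] by simp_all
    define m where "m = (if x \<in> A then n - 1 else n)"
    have "m \<le> card (A \<inter> W)" using 3 \<open>card A \<le> card (A \<inter> W) + 1\<close> by (auto simp: m_def)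
    then obtain X where X: "stable_set W (induced E W) X" "card (X \<inter> (A \<inter> W)) = m"
      "min (card (A \<inter> W)) (card (B \<inter> W)) \<le> card X"
      using less.hyps[OF \<open>card W < card V\<close> forest_induced[OF less.prems(1) \<open>W \<subseteq> V\<close>]
          bipartition_induced[OF less.prems(2) \<open>W \<subseteq> V\<close>]] by blast
    have stable: "stable_set V E (insert x X)"
      and size: "card (insert x X) = card X + 1"
      and "card (insert x X \<inter> A) = m + (if x \<in> A then 1 else 0)"
      using stable_set_insert_deleted_vertex[OF _ \<open>x \<in> V\<close> W_def X(1)] X(2) less.prems(1)
      by (auto simp: forest_def)
    then have meets_A: "card (insert x X \<inter> A) = n" using 3 by (simp add: m_def)
    have large: "min (card A) (card B) \<le> card (insert x X)"
      using size X(3) \<open>card A \<le> card (A \<inter> W) + 1\<close> \<open>card B \<le> card (B \<inter> W) + 1\<close> by linarith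
    show ?thesis using stable meets_A large by blast
  qed
qed

theorem mainTheorem6:
  fixes V :: "'a set" and E :: "'a \<Rightarrow> 'a \<Rightarrow> bool" and A B :: "'a set" and n :: nat
  assumes "forest V E"
    and "bipartition V E A B"
    and "card A = card B"
    and "n \<le> card A"
  shows "\<exists>X. stable_set V E X \<and> card X = card A \<and> card (X \<inter> A) = n"
proof -
  obtain X where X: "stable_set V E X" "card (X \<inter> A) = n" "card A \<le> card X"
    using forest_stable_set_meeting_side[OF assms(1,2,4)] assms(3) by auto
  have "finite X"
    using X(1) assms(1) finite_subset by (auto simp: stable_set_def forest_def simple_graph_def)
  then obtain Z where Z: "X \<inter> A \<subseteq> Z" "Z \<subseteq> X" "card Z = card A"
    using exists_subset_between[of "X \<inter> A" "card A" X] X(2,3) assms(4) by auto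
  then have "Z \<inter> A = X \<inter> A" by blast
  then show ?thesis using stable_set_subset[OF X(1) Z(2)] Z(3) X(2) by auto
qed

end
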